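(* Let $q\ge1$, $N=2^q$, and let $B^{(1)}=(b_{i,j})_{i,j=1}^{N-1}$ be the symmetric Toeplitz matrix with $b_{i,i}=\frac{2N}3-1$, $b_{i,j}=\frac N6-1$ if $|i-j|=1$, and $b_{i,j}=-1$ if $|i-j|\ge2$. For $k=2,\dots,q$ define $B^{(k)}=R_kB^{(k-1)}R_k^T$, where $R_k:\mathbb R^{N/2^{k-2}-1}\to\mathbb R^{N/2^{k-1}-1}$ is $(R_k\nu)_i=\nu_{2i-1}+2\nu_{2i}+\nu_{2i+1}$. Let $D_{(k)}$ be the diagonal of $B^{(k)}$. Then $1\le\lambda_{\max}(D_{(k)}^{-1}B^{(k)})<3$ for all $1\le k\le q$.
   Context: $B^{(k)}$ has size $(N/2^{k-1}-1)\times(N/2^{k-1}-1)$; $R_k$ is $4$ times the standard full-weighting restriction operator. *)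

theory Defs
  imports "Jordan_Normal_Form.Char_Poly"
begin

text \<open>Matrices are 0-indexed here: the paper's index i corresponds to i-1.\<close>

definition Bsize :: "nat \<Rightarrow> nat \<Rightarrow> nat" where
  "Bsize N k = N div 2 ^ (k - 1) - 1"

definition B1 :: "nat \<Rightarrow> real mat" where
  "B1 N = mat (N - 1) (N - 1) (\<lambda>(i, j).
      if i = j then 2 * real N / 3 - 1
      else if i = j + 1 \<or> j = i + 1 then real N / 6 - 1
      else -1)"

definition Rmat :: "nat \<Rightarrow> real mat" where
  "Rmat m = mat m (2 * m + 1) (\<lambda>(i, j).
      if j = 2 * i then 1
      else if j = 2 * i + 1 then 2
      else if j = 2 * i + 2 then 1
      else 0)"

text \<open>B^(k) for k >= 1 (the value at k = 0 is irrelevant).\<close>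
fun Bmat :: "nat \<Rightarrow> nat \<Rightarrow> real mat" where
  "Bmat N 0 = B1 N"
| "Bmat N (Suc 0) = B1 N"
| "Bmat N (Suc (Suc k)) =
     Rmat (Bsize N (Suc (Suc k))) * Bmat N (Suc k) * transpose_mat (Rmat (Bsize N (Suc (Suc k))))"

definition diag_part :: "real mat \<Rightarrow> real mat" where
  "diag_part A = mat_diag (dim_row A) (\<lambda>i. A $$ (i, i))"

text \<open>Inverse of the diagonal part, D^(-1) (diagonal entries assumed nonzero).\<close>
definition diag_part_inv :: "real mat \<Rightarrow> real mat" where
  "diag_part_inv A = mat_diag (dim_row A) (\<lambda>i. 1 / A $$ (i, i))"

definition lambda_max :: "real mat \<Rightarrow> real" where
  "lambda_max A = Max {l. eigenvalue A l}"

end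

theory Submission
  imports Defs
begin

(* Write T(n; a, b, c) for the n x n matrix with diagonal a, first off-diagonals b and all
   other entries c, so that B^(1) = T(N - 1; 2N/3 - 1, N/6 - 1, -1).  A direct computation of the
   nine-point stencil shows R T(2m + 1; a, b, c) R^T = T(m; 6a + 8b + 2c, a + 4b + 11c, 16c), and
   for B^(1) of grid size 2M these parameters are 16 times those of grid size M.  Hence
   B^(k) = 16^(k-1) B^(1) for grid size N/2^(k-1), and as D^(-1) B is invariant under scaling only
   the Jacobi matrix J = D^(-1) B^(1) = T(M - 1; 1, b, c) with M = 2^p remains.  Gershgorin's
   theorem gives |lambda - 1| <= (M - 2)|c| + 2|b| < 2 for its eigenvalues.  For M = 2 the matrix
   J is (1); for M >= 4 the sampled cosine (1, 0, -1, 0, 1, ...) is an eigenvector with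
   eigenvalue 1 - c > 1, because its entries sum to 0 and the two neighbours of every entry
   cancel. *)

lemma mult_smult_mult:
  fixes A B C :: "'a :: comm_semiring_0 mat"
  assumes "A \<in> carrier_mat m n" "B \<in> carrier_mat n n'" "C \<in> carrier_mat n' p"
  shows "A * (s \<cdot>\<^sub>m B) * C = s \<cdot>\<^sub>m (A * B * C)"
  by (simp only: mult_smult_distrib[OF assms(1,2)]
      mult_smult_assoc_mat[OF mult_carrier_mat[OF assms(1,2)] assms(3)])

lemma eigenvalue_in_Gershgorin_disc:
  fixes A :: "'a :: linordered_idom mat"
  assumes A: "A \<in> carrier_mat n n" and ev: "eigenvalue A l"
  shows "\<exists>i<n. \<bar>l - A $$ (i, i)\<bar> \<le> (\<Sum>j\<in>{0..<n} - {i}. \<bar>A $$ (i, j)\<bar>)"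
proof -
  obtain v where v: "v \<in> carrier_vec n" "v \<noteq> 0\<^sub>v n" "A *\<^sub>v v = l \<cdot>\<^sub>v v"
    using A ev unfolding eigenvalue_def eigenvector_def by auto
  have "n > 0"
    using v(1,2) by (intro Nat.gr0I) (auto intro: eq_vecI)
  obtain i where i: "i < n" and max: "\<And>j. j < n \<Longrightarrow> \<bar>v $ j\<bar> \<le> \<bar>v $ i\<bar>"
  proof -
    let ?S = "(\<lambda>j. \<bar>v $ j\<bar>) ` {0..<n}"
    have "Max ?S \<in> ?S"
      using \<open>n > 0\<close> by (intro Max_in) auto
    then obtain i where "i < n" "\<bar>v $ i\<bar> = Max ?S"
      by auto
    then show ?thesis
      using that by simp
  qed
  have "\<bar>v $ i\<bar> > 0"
  proof (rule ccontr)
    assume "\<not> \<bar>v $ i\<bar> > 0"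
    then have "v = 0\<^sub>v n"
      using v(1) max by (intro eq_vecI) (auto dest: max)
    with v(2) show False ..
  qed
  have "l * v $ i = (A *\<^sub>v v) $ i"
    using v i by simp
  also have "\<dots> = (\<Sum>j\<in>{0..<n}. A $$ (i, j) * v $ j)"
    using A v(1) i by (simp add: scalar_prod_def)
  also have "\<dots> = A $$ (i, i) * v $ i + (\<Sum>j\<in>{0..<n} - {i}. A $$ (i, j) * v $ j)"
    using i by (subst sum.remove[of _ i]) auto
  finally have "(l - A $$ (i, i)) * v $ i = (\<Sum>j\<in>{0..<n} - {i}. A $$ (i, j) * v $ j)"
    by (simp add: algebra_simps)
  then have "\<bar>l - A $$ (i, i)\<bar> * \<bar>v $ i\<bar> = \<bar>\<Sum>j\<in>{0..<n} - {i}. A $$ (i, j) * v $ j\<bar>"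
    by (simp add: abs_mult [symmetric])
  also have "\<dots> \<le> (\<Sum>j\<in>{0..<n} - {i}. \<bar>A $$ (i, j)\<bar> * \<bar>v $ i\<bar>)"
    by (rule order_trans[OF sum_abs sum_mono]) (auto simp: abs_mult intro: mult_left_mono max)
  also have "\<dots> = (\<Sum>j\<in>{0..<n} - {i}. \<bar>A $$ (i, j)\<bar>) * \<bar>v $ i\<bar>"
    by (simp add: sum_distrib_right)
  finally show ?thesis
    using i \<open>\<bar>v $ i\<bar> > 0\<close> by (auto simp: mult_le_cancel_right)
qed

lemma finite_eigenvalues:
  fixes A :: "'a :: field mat"
  assumes "A \<in> carrier_mat n n"
  shows "finite {l. eigenvalue A l}"
proof -
  have "char_poly A \<noteq> 0"
    using degree_monic_char_poly[OF assms] by auto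
  then show ?thesis
    using poly_roots_finite eigenvalue_root_char_poly[OF assms] by simp
qed

lemma eigenvalue_le_lambda_max:
  assumes "A \<in> carrier_mat n n" "eigenvalue A l"
  shows "l \<le> lambda_max A"
  using assms finite_eigenvalues unfolding lambda_max_def by (intro Max_ge) auto

lemma eigenvalue_lambda_max:
  assumes "A \<in> carrier_mat n n" "eigenvalue A l"
  shows "eigenvalue A (lambda_max A)"
  using assms finite_eigenvalues Max_in[of "{l. eigenvalue A l}"] unfolding lambda_max_def by auto

lemma diag_part_inv_mult:
  assumes "A \<in> carrier_mat n m"
  shows "diag_part_inv A * A = mat n m (\<lambda>(i, j). A $$ (i, j) / A $$ (i, i))"
  using assms by (simp add: diag_part_inv_def mat_diag_mult_left)

lemma diag_part_inv_smult_mult: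
  assumes "A \<in> carrier_mat n n" "s \<noteq> 0"
  shows "diag_part_inv (s \<cdot>\<^sub>m A) * (s \<cdot>\<^sub>m A) = diag_part_inv A * A"
  using assms by (simp add: diag_part_inv_mult[of _ n n]) (auto intro!: eq_matI)

definition toeplitz_entry :: "real \<Rightarrow> real \<Rightarrow> real \<Rightarrow> nat \<Rightarrow> nat \<Rightarrow> real" where
  "toeplitz_entry a b c i j = (if i = j then a else if i = j + 1 \<or> j = i + 1 then b else c)"

definition toeplitz_mat :: "nat \<Rightarrow> real \<Rightarrow> real \<Rightarrow> real \<Rightarrow> real mat" where
  "toeplitz_mat n a b c = mat n n (\<lambda>(i, j). toeplitz_entry a b c i j)"

lemma toeplitz_mat_carrier [simp]: "toeplitz_mat n a b c \<in> carrier_mat n n"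
  by (simp add: toeplitz_mat_def)

lemma dim_toeplitz_mat [simp]:
  "dim_row (toeplitz_mat n a b c) = n" "dim_col (toeplitz_mat n a b c) = n"
  by (simp_all add: toeplitz_mat_def)

lemma index_toeplitz_mat [simp]:
  "i < n \<Longrightarrow> j < n \<Longrightarrow> toeplitz_mat n a b c $$ (i, j) = toeplitz_entry a b c i j"
  by (simp add: toeplitz_mat_def)

lemma smult_toeplitz_mat:
  "s \<cdot>\<^sub>m toeplitz_mat n a b c = toeplitz_mat n (s * a) (s * b) (s * c)"
  by (rule eq_matI) (auto simp: toeplitz_entry_def)

lemma diag_part_inv_toeplitz_mult:
  assumes "a \<noteq> 0"
  shows "diag_part_inv (toeplitz_mat n a b c) * toeplitz_mat n a b c = toeplitz_mat n 1 (b / a) (c / a)"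
  using assms by (auto simp: diag_part_inv_mult[OF toeplitz_mat_carrier] toeplitz_entry_def intro!: eq_matI)

lemma toeplitz_mult_vec_nth:
  assumes "i < n"
  shows "(toeplitz_mat n a b c *\<^sub>v vec n f) $ i = c * (\<Sum>j<n. f j) + (a - c) * f i
    + (b - c) * ((if i + 1 < n then f (i + 1) else 0) + (if 0 < i then f (i - 1) else 0))"
proof -
  have "(toeplitz_mat n a b c *\<^sub>v vec n f) $ i = (\<Sum>j<n. toeplitz_entry a b c i j * f j)"
    using assms by (simp add: scalar_prod_def atLeast0LessThan)
  also have "\<dots> = (\<Sum>j<n. c * f j + (if j = i then (a - c) * f j else 0)
      + (if j = i + 1 then (b - c) * f j else 0) + (if j = i - 1 \<and> 0 < i then (b - c) * f j else 0))"
    by (intro sum.cong) (auto simp: toeplitz_entry_def algebra_simps)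
  also have "\<dots> = c * (\<Sum>j<n. f j) + (a - c) * f i
    + (b - c) * ((if i + 1 < n then f (i + 1) else 0) + (if 0 < i then f (i - 1) else 0))"
    using assms by (cases "i = 0") (auto simp: sum.distrib sum_distrib_left algebra_simps)
  finally show ?thesis .
qed

lemma eigenvalue_toeplitz_dist_le:
  assumes "eigenvalue (toeplitz_mat n a b c) l"
  shows "\<bar>l - a\<bar> \<le> real (n - 1) * \<bar>c\<bar> + 2 * \<bar>b\<bar>"
proof -
  obtain i where i: "i < n"
    and disc: "\<bar>l - a\<bar> \<le> (\<Sum>j\<in>{0..<n} - {i}. \<bar>toeplitz_entry a b c i j\<bar>)"
    using eigenvalue_in_Gershgorin_disc[OF toeplitz_mat_carrier assms] by (auto simp: toeplitz_entry_def)
  have "(\<Sum>j\<in>{0..<n} - {i}. \<bar>toeplitz_entry a b c i j\<bar>)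
      \<le> (\<Sum>j\<in>{0..<n} - {i}. \<bar>c\<bar> + (if j = i + 1 then \<bar>b\<bar> else 0)
            + (if j = i - 1 \<and> 0 < i then \<bar>b\<bar> else 0))"
    by (intro sum_mono) (auto simp: toeplitz_entry_def)
  also have "\<dots> \<le> real (n - 1) * \<bar>c\<bar> + 2 * \<bar>b\<bar>"
    using i by (cases "i = 0") (auto simp: sum.distrib sum.delta')
  finally show ?thesis
    using disc by linarith
qed

lemma eigenvalue_toeplitz_mat_1_iff: "eigenvalue (toeplitz_mat 1 a b c) l \<longleftrightarrow> l = a"
proof
  assume "eigenvalue (toeplitz_mat 1 a b c) l"
  from eigenvalue_in_Gershgorin_disc[OF toeplitz_mat_carrier this]
  show "l = a"
    by (auto simp: toeplitz_entry_def)
next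
  assume "l = a"
  moreover have "toeplitz_mat 1 a b c *\<^sub>v vec 1 (\<lambda>_. 1) = a \<cdot>\<^sub>v vec 1 (\<lambda>_. 1)"
    by (intro eq_vecI) (auto simp: scalar_prod_def toeplitz_entry_def)
  moreover have "vec 1 (\<lambda>_. 1 :: real) \<noteq> 0\<^sub>v 1"
    by (simp add: vec_eq_iff)
  ultimately show "eigenvalue (toeplitz_mat 1 a b c) l"
    unfolding eigenvalue_def eigenvector_def by (intro exI[of _ "vec 1 (\<lambda>_. 1)"]) auto
qed

text \<open>The sampled cosine \<open>cos (j * pi / 2)\<close>.\<close>
definition wave4 :: "nat \<Rightarrow> real" where
  "wave4 j = (if j mod 4 = 0 then 1 else if j mod 4 = 2 then -1 else 0)"

lemma wave4_add_2: "wave4 (j + 2) = - wave4 j"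
proof -
  have "(j + 2) mod 4 = (j mod 4 + 2) mod 4"
    by (rule mod_add_left_eq[symmetric])
  moreover have "j mod 4 = 0 \<or> j mod 4 = 1 \<or> j mod 4 = 2 \<or> j mod 4 = 3"
    by linarith
  ultimately show ?thesis
    unfolding wave4_def by auto
qed

lemma wave4_odd:
  assumes "odd j"
  shows "wave4 j = 0"
proof -
  have "j mod 4 = 1 \<or> j mod 4 = 3"
    using assms by presburger
  then show ?thesis
    by (auto simp: wave4_def)
qed

lemma sum_wave4: "(\<Sum>j<n. wave4 j) = (if n mod 4 = 1 \<or> n mod 4 = 2 then 1 else 0)"
  by (induction n) (auto simp: wave4_def mod_Suc)

lemma eigenvalue_toeplitz_mat_mod_4_eq_3:
  assumes "n mod 4 = 3"
  shows "eigenvalue (toeplitz_mat n a b c) (a - c)"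
proof -
  let ?v = "vec n wave4"
  have neighbours: "(if i + 1 < n then wave4 (i + 1) else 0) + (if 0 < i then wave4 (i - 1) else 0) = 0"
    if "i < n" for i
  proof (cases "even i")
    case True
    then show ?thesis
      by (simp add: wave4_odd)
  next
    case False
    then have "i + 1 < n" "0 < i" "i + 1 = (i - 1) + 2"
      using that assms by presburger+
    then show ?thesis
      using wave4_add_2[of "i - 1"] by simp
  qed
  have "toeplitz_mat n a b c *\<^sub>v ?v = (a - c) \<cdot>\<^sub>v ?v"
  proof (rule eq_vecI)
    fix i assume "i < dim_vec ((a - c) \<cdot>\<^sub>v ?v)"
    then have i: "i < n"
      by simp
    then show "(toeplitz_mat n a b c *\<^sub>v ?v) $ i = ((a - c) \<cdot>\<^sub>v ?v) $ i"
      using assms by (simp only: toeplitz_mult_vec_nth[OF i] neighbours[OF i] sum_wave4) simp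
  qed simp
  moreover have "?v \<noteq> 0\<^sub>v n"
  proof
    assume "?v = 0\<^sub>v n"
    then have "?v $ 0 = 0\<^sub>v n $ 0"
      by (rule arg_cong)
    then show False
      using assms by (simp add: wave4_def)
  qed
  ultimately show ?thesis
    unfolding eigenvalue_def eigenvector_def by (intro exI[of _ ?v]) simp
qed

lemma dim_Rmat [simp]: "dim_row (Rmat m) = m" "dim_col (Rmat m) = 2 * m + 1"
  by (simp_all add: Rmat_def)

lemma Rmat_carrier [simp]: "Rmat m \<in> carrier_mat m (2 * m + 1)"
  by (simp add: carrier_matI)

lemma Rmat_row_sum:
  assumes "i < m"
  shows "(\<Sum>x<2 * m + 1. Rmat m $$ (i, x) * g x) = g (2 * i) + 2 * g (2 * i + 1) + g (2 * i + 2)"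
proof -
  have "(\<Sum>x<2 * m + 1. Rmat m $$ (i, x) * g x)
      = (\<Sum>x\<in>{2 * i, 2 * i + 1, 2 * i + 2}. Rmat m $$ (i, x) * g x)"
    using assms by (intro sum.mono_neutral_right) (auto simp: Rmat_def)
  then show ?thesis
    using assms by (simp add: Rmat_def)
qed

lemma index_Rmat_mult:
  assumes "A \<in> carrier_mat (2 * m + 1) n" "i < m" "j < n"
  shows "(Rmat m * A) $$ (i, j) = A $$ (2 * i, j) + 2 * A $$ (2 * i + 1, j) + A $$ (2 * i + 2, j)"
proof -
  have "(Rmat m * A) $$ (i, j) = (\<Sum>x<2 * m + 1. Rmat m $$ (i, x) * A $$ (x, j))"
    using assms
    by (auto simp: scalar_prod_def atLeast0LessThan simp del: sum.lessThan_Suc intro!: sum.cong)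
  also have "\<dots> = A $$ (2 * i, j) + 2 * A $$ (2 * i + 1, j) + A $$ (2 * i + 2, j)"
    by (rule Rmat_row_sum[OF \<open>i < m\<close>])
  finally show ?thesis .
qed

lemma index_mult_Rmat_transpose:
  assumes "A \<in> carrier_mat n (2 * m + 1)" "i < n" "j < m"
  shows "(A * transpose_mat (Rmat m)) $$ (i, j) = A $$ (i, 2 * j) + 2 * A $$ (i, 2 * j + 1) + A $$ (i, 2 * j + 2)"
proof -
  have "(A * transpose_mat (Rmat m)) $$ (i, j) = (\<Sum>x<2 * m + 1. Rmat m $$ (j, x) * A $$ (i, x))"
    using assms
    by (auto simp: scalar_prod_def atLeast0LessThan mult.commute simp del: sum.lessThan_Suc intro!: sum.cong)
  also have "\<dots> = A $$ (i, 2 * j) + 2 * A $$ (i, 2 * j + 1) + A $$ (i, 2 * j + 2)"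
    by (rule Rmat_row_sum[OF \<open>j < m\<close>])
  finally show ?thesis .
qed

lemma toeplitz_entry_coarsen:
  fixes a b c :: real and i j :: nat
  defines "t \<equiv> toeplitz_entry a b c"
  shows "(t (2 * i) (2 * j) + 2 * t (2 * i + 1) (2 * j) + t (2 * i + 2) (2 * j))
    + 2 * (t (2 * i) (2 * j + 1) + 2 * t (2 * i + 1) (2 * j + 1) + t (2 * i + 2) (2 * j + 1))
    + (t (2 * i) (2 * j + 2) + 2 * t (2 * i + 1) (2 * j + 2) + t (2 * i + 2) (2 * j + 2))
    = toeplitz_entry (6 * a + 8 * b + 2 * c) (a + 4 * b + 11 * c) (16 * c) i j"
proof -
  consider "i = j" | "i = j + 1" | "j = i + 1" | "i > j + 1" | "j > i + 1"
    by linarith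
  then show ?thesis
    by cases (auto simp: t_def toeplitz_entry_def)
qed

lemma Rmat_toeplitz_Rmat_transpose:
  "Rmat m * toeplitz_mat (2 * m + 1) a b c * transpose_mat (Rmat m)
   = toeplitz_mat m (6 * a + 8 * b + 2 * c) (a + 4 * b + 11 * c) (16 * c)"
proof (rule eq_matI)
  fix i j assume "i < dim_row (toeplitz_mat m (6 * a + 8 * b + 2 * c) (a + 4 * b + 11 * c) (16 * c))"
    and "j < dim_col (toeplitz_mat m (6 * a + 8 * b + 2 * c) (a + 4 * b + 11 * c) (16 * c))"
  then have i: "i < m" and j: "j < m" by simp_all
  let ?T = "toeplitz_mat (2 * m + 1) a b c"
  have RT: "Rmat m * ?T \<in> carrier_mat m (2 * m + 1)"
    by (rule mult_carrier_mat[OF Rmat_carrier]) simp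
  have RT_entry: "(Rmat m * ?T) $$ (i, x) = toeplitz_entry a b c (2 * i) x
      + 2 * toeplitz_entry a b c (2 * i + 1) x + toeplitz_entry a b c (2 * i + 2) x"
    if "x < 2 * m + 1" for x
    using i that by (simp only: index_Rmat_mult[OF toeplitz_mat_carrier]) simp
  have "(Rmat m * ?T * transpose_mat (Rmat m)) $$ (i, j)
      = (Rmat m * ?T) $$ (i, 2 * j) + 2 * (Rmat m * ?T) $$ (i, 2 * j + 1) + (Rmat m * ?T) $$ (i, 2 * j + 2)"
    by (rule index_mult_Rmat_transpose[OF RT i j])
  also have "\<dots> = toeplitz_entry (6 * a + 8 * b + 2 * c) (a + 4 * b + 11 * c) (16 * c) i j"
    using j by (simp only: RT_entry toeplitz_entry_coarsen)
  finally show "(Rmat m * ?T * transpose_mat (Rmat m)) $$ (i, j)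
      = toeplitz_mat m (6 * a + 8 * b + 2 * c) (a + 4 * b + 11 * c) (16 * c) $$ (i, j)"
    using i j by simp
qed simp_all

lemma B1_eq_toeplitz_mat: "B1 N = toeplitz_mat (N - 1) (2 * real N / 3 - 1) (real N / 6 - 1) (- 1)"
  by (rule eq_matI) (auto simp: B1_def toeplitz_entry_def)

lemma Rmat_B1_Rmat_transpose:
  assumes "M \<ge> 1"
  shows "Rmat (M - 1) * B1 (2 * M) * transpose_mat (Rmat (M - 1)) = 16 \<cdot>\<^sub>m B1 M"
proof -
  have "2 * M - 1 = 2 * (M - 1) + 1" using assms by simp
  then have "B1 (2 * M) = toeplitz_mat (2 * (M - 1) + 1) (4 * real M / 3 - 1) (real M / 3 - 1) (- 1)"
    by (simp add: B1_eq_toeplitz_mat)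
  then have "Rmat (M - 1) * B1 (2 * M) * transpose_mat (Rmat (M - 1))
      = toeplitz_mat (M - 1) (6 * (4 * real M / 3 - 1) + 8 * (real M / 3 - 1) + 2 * - 1)
          ((4 * real M / 3 - 1) + 4 * (real M / 3 - 1) + 11 * - 1) (16 * - 1)"
    by (simp only: Rmat_toeplitz_Rmat_transpose)
  also have "\<dots> = toeplitz_mat (M - 1) (16 * (2 * real M / 3 - 1)) (16 * (real M / 6 - 1)) (16 * - 1)"
    by (simp add: algebra_simps)
  finally show ?thesis
    by (simp only: B1_eq_toeplitz_mat smult_toeplitz_mat)
qed

lemma Bmat_eq_smult_B1:
  assumes "1 \<le> k" "k \<le> q"
  shows "Bmat (2 ^ q) k = 16 ^ (k - 1) \<cdot>\<^sub>m B1 (2 ^ (q - k + 1))"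
  using assms
proof (induction k rule: nat_induct_at_least)
  case base
  then have "q - 1 + 1 = q" by simp
  then show ?case by (intro eq_matI) simp_all
next
  case (Suc k)
  define M :: nat where "M = 2 ^ (q - k)"
  have qk: "q - Suc k + 1 = q - k"
    using Suc.prems by simp
  have M: "M \<ge> 1" "2 * M = 2 ^ (q - k + 1)"
    by (simp_all add: M_def)
  have "Bsize (2 ^ q) (Suc k) = M - 1"
    using Suc.prems by (simp add: Bsize_def M_def power_diff)
  moreover obtain k' where "k = Suc k'"
    using Suc.hyps by (cases k) auto
  ultimately have "Bmat (2 ^ q) (Suc k) = Rmat (M - 1) * Bmat (2 ^ q) k * transpose_mat (Rmat (M - 1))"
    by (simp only: Bmat.simps(3))
  also have "\<dots> = 16 ^ (k - 1) \<cdot>\<^sub>m (Rmat (M - 1) * B1 (2 * M) * transpose_mat (Rmat (M - 1)))"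
  proof -
    have "2 * M - 1 = 2 * (M - 1) + 1"
      using M(1) by simp
    then have B: "B1 (2 * M) \<in> carrier_mat (2 * (M - 1) + 1) (2 * (M - 1) + 1)"
      unfolding B1_def by (metis mat_carrier)
    have "Bmat (2 ^ q) k = 16 ^ (k - 1) \<cdot>\<^sub>m B1 (2 * M)"
      using Suc by (simp only: M(2))
    then show ?thesis
      by (simp only: mult_smult_mult[OF Rmat_carrier B transpose_carrier_mat[THEN iffD2, OF Rmat_carrier]])
  qed
  also have "\<dots> = 16 ^ (k - 1) \<cdot>\<^sub>m (16 \<cdot>\<^sub>m B1 M)"
    by (simp only: Rmat_B1_Rmat_transpose[OF M(1)])
  also have "\<dots> = 16 ^ (Suc k - 1) \<cdot>\<^sub>m B1 M"
    using \<open>k = Suc k'\<close> by (intro eq_matI) auto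
  finally show ?case
    unfolding qk M_def[symmetric] .
qed

lemma Jacobi_B1_eq_toeplitz_mat:
  assumes "N \<ge> 2"
  defines "d \<equiv> 2 * real N / 3 - 1"
  shows "diag_part_inv (B1 N) * B1 N = toeplitz_mat (N - 1) 1 ((real N / 6 - 1) / d) (- 1 / d)"
proof -
  have "d \<noteq> 0"
    using assms by (simp add: d_def)
  then show ?thesis
    by (simp add: B1_eq_toeplitz_mat diag_part_inv_toeplitz_mult d_def)
qed

lemma Jacobi_B1_eigenvalue_less_3:
  assumes "N \<ge> 4" and "eigenvalue (diag_part_inv (B1 N) * B1 N) l"
  shows "l < 3"
proof -
  define d where "d = 2 * real N / 3 - 1"
  have "N \<ge> 2" "d > 0"
    using assms(1) by (simp_all add: d_def)
  from assms(2) have "eigenvalue (toeplitz_mat (N - 1) 1 ((real N / 6 - 1) / d) (- 1 / d)) l"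
    unfolding Jacobi_B1_eq_toeplitz_mat[OF \<open>N \<ge> 2\<close>] d_def .
  from eigenvalue_toeplitz_dist_le[OF this]
  have "\<bar>l - 1\<bar> \<le> real (N - 1 - 1) * \<bar>- 1 / d\<bar> + 2 * \<bar>(real N / 6 - 1) / d\<bar>" .
  moreover have "real (N - 1 - 1) * \<bar>- 1 / d\<bar> + 2 * \<bar>(real N / 6 - 1) / d\<bar>
      = (real N - 2 + 2 * \<bar>real N / 6 - 1\<bar>) / d"
    using assms(1) \<open>d > 0\<close> by (simp add: of_nat_diff abs_divide add_divide_distrib)
  moreover have "(real N - 2 + 2 * \<bar>real N / 6 - 1\<bar>) / d < 2"
  proof -
    have "real N - 2 + 2 * \<bar>real N / 6 - 1\<bar> < 2 * d"
      using assms(1) unfolding d_def by (cases "N \<ge> 6") auto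
    then show ?thesis
      using \<open>d > 0\<close> by (simp add: divide_less_eq)
  qed
  ultimately have "\<bar>l - 1\<bar> < 2"
    by linarith
  then show ?thesis
    by linarith
qed

lemma Jacobi_B1_eigenvalue_greater_1:
  assumes "N \<ge> 4" and "4 dvd N"
  shows "\<exists>l > 1. eigenvalue (diag_part_inv (B1 N) * B1 N) l"
proof -
  define d where "d = 2 * real N / 3 - 1"
  have "N \<ge> 2" "d > 0"
    using assms(1) by (simp_all add: d_def)
  obtain m where "N = 4 * m"
    using assms(2) by blast
  then have "N - 1 = 4 * (m - 1) + 3"
    using assms(1) by simp
  then have "(N - 1) mod 4 = 3"
    by simp
  from eigenvalue_toeplitz_mat_mod_4_eq_3[OF this, of 1 "(real N / 6 - 1) / d" "- 1 / d"]
  have "eigenvalue (diag_part_inv (B1 N) * B1 N) (1 - - 1 / d)"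
    unfolding Jacobi_B1_eq_toeplitz_mat[OF \<open>N \<ge> 2\<close>] d_def .
  then show ?thesis
    using \<open>d > 0\<close> by (intro exI[of _ "1 - - 1 / d"]) simp
qed

lemma lambda_max_Jacobi_B1:
  assumes "p \<ge> 1"
  shows "1 \<le> lambda_max (diag_part_inv (B1 (2 ^ p)) * B1 (2 ^ p))
       \<and> lambda_max (diag_part_inv (B1 (2 ^ p)) * B1 (2 ^ p)) < 3"
proof (cases "p = 1")
  case True
  have "diag_part_inv (B1 2) * B1 2 = toeplitz_mat 1 1 (- 2) (- 3)"
    by (simp add: Jacobi_B1_eq_toeplitz_mat)
  then have "lambda_max (diag_part_inv (B1 2) * B1 2) = 1"
    using eigenvalue_lambda_max[OF toeplitz_mat_carrier] eigenvalue_toeplitz_mat_1_iff by metis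
  then show ?thesis
    using True by simp
next
  case False
  let ?J = "diag_part_inv (B1 (2 ^ p)) * B1 (2 ^ p)"
  have J: "?J \<in> carrier_mat (2 ^ p - 1) (2 ^ p - 1)"
    unfolding diag_part_inv_def
    by (rule mult_carrier_mat[of _ "2 ^ p - 1" "2 ^ p - 1"]) (simp_all add: B1_def)
  have "(4 :: nat) \<le> 2 ^ p" "4 dvd (2 :: nat) ^ p"
    using False assms power_increasing[of 2 p "2 :: nat"] le_imp_power_dvd[of 2 p "2 :: nat"] by simp_all
  then obtain l where "l > 1" "eigenvalue ?J l"
    using Jacobi_B1_eigenvalue_greater_1 by blast
  then show ?thesis
    using eigenvalue_le_lambda_max[OF J] eigenvalue_lambda_max[OF J]
      Jacobi_B1_eigenvalue_less_3[OF \<open>4 \<le> 2 ^ p\<close>] by fastforce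
qed

theorem lemma4p6:
  fixes q N k :: nat
  assumes "q \<ge> 1" and "N = 2 ^ q" and "1 \<le> k" and "k \<le> q"
  shows "1 \<le> lambda_max (diag_part_inv (Bmat N k) * Bmat N k)
       \<and> lambda_max (diag_part_inv (Bmat N k) * Bmat N k) < 3"
proof -
  let ?p = "q - k + 1"
  have "Bmat N k = 16 ^ (k - 1) \<cdot>\<^sub>m B1 (2 ^ ?p)"
    using assms by (simp add: Bmat_eq_smult_B1)
  moreover have "B1 (2 ^ ?p) \<in> carrier_mat (2 ^ ?p - 1) (2 ^ ?p - 1)"
    by (simp add: B1_def)
  ultimately have "diag_part_inv (Bmat N k) * Bmat N k = diag_part_inv (B1 (2 ^ ?p)) * B1 (2 ^ ?p)"
    by (simp add: diag_part_inv_smult_mult)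
  then show ?thesis
    using lambda_max_Jacobi_B1[of ?p] by simp
qed

end
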